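(* Let $f\in\mathrm{Homeo}(\mathbb T^2)$ be semiconjugate to a rigid rotation $R_\rho$ of $\mathbb S^1$ and assume the non-wandering set $\Omega(f)$ is externally transitive. Then the semiconjugacy is unique modulo rotations: for any two semiconjugacies $h_1,h_2$ from $f$ to $R_\rho$ there is a rigid rotation $R$ of $\mathbb S^1$ with $h_1=R\circ h_2$ on all of $\mathbb T^2$.
   Context: A semiconjugacy from $f$ to $R_\rho(x)=x+\rho$ is a continuous surjection $h:\mathbb T^2\to\mathbb S^1$ with $h\circ f=R_\rho\circ h$. An $f$-invariant set $\Omega$ is externally transitive if for all $x,y\in\Omega$ and neighbourhoods $U_x,U_y$ in $\mathbb T^2$ there is $n\in\mathbb N$ with $f^n(U_x)\cap U_y\ne\emptyset$. *)

theory Defs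
  imports "HOL-Analysis.Analysis"
begin

definition S1 :: "complex set" where
  "S1 = sphere 0 1"

definition T2 :: "(complex \<times> complex) set" where
  "T2 = S1 \<times> S1"

text \<open>Rigid rotation R_rho(x) = x + rho on R/Z, i.e. multiplication by exp(2 pi i rho).\<close>

definition rot :: "real \<Rightarrow> complex \<Rightarrow> complex" where
  "rot \<rho> z = cis (2 * pi * \<rho>) * z"

definition semiconj ::
  "(complex \<times> complex \<Rightarrow> complex \<times> complex) \<Rightarrow> real \<Rightarrow> (complex \<times> complex \<Rightarrow> complex) \<Rightarrow> bool" where
  "semiconj f \<rho> h \<longleftrightarrow>
     continuous_on T2 h \<and> h ` T2 = S1 \<and> (\<forall>x\<in>T2. h (f x) = rot \<rho> (h x))"

definition nonwandering :: "(complex \<times> complex \<Rightarrow> complex \<times> complex) \<Rightarrow> (complex \<times> complex) set" where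
  "nonwandering f = {x \<in> T2. \<forall>U. open U \<and> x \<in> U \<longrightarrow>
      (\<exists>n\<ge>1. (f ^^ n) ` (U \<inter> T2) \<inter> (U \<inter> T2) \<noteq> {})}"

definition externally_transitive ::
  "(complex \<times> complex \<Rightarrow> complex \<times> complex) \<Rightarrow> (complex \<times> complex) set \<Rightarrow> bool" where
  "externally_transitive f \<Omega> \<longleftrightarrow>
     (\<forall>x\<in>\<Omega>. \<forall>y\<in>\<Omega>. \<forall>U V. open U \<and> x \<in> U \<and> open V \<and> y \<in> V \<longrightarrow>
        (\<exists>n\<ge>1. (f ^^ n) ` (U \<inter> T2) \<inter> (V \<inter> T2) \<noteq> {}))"

end

theory Submission
  imports Defs
begin

text \<open>For two semiconjugacies h1, h2 the quotient h1/h2 is a continuous function on the torus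
  that is invariant under f. External transitivity forces an invariant continuous function to be
  constant on the non-wandering set, and every orbit accumulates on the non-wandering set, so the
  quotient is a constant unit complex number, i.e. a rotation.\<close>

lemma compact_T2: "compact T2"
  unfolding T2_def S1_def by (intro compact_Times compact_sphere)

lemma funpow_in_invariant_set:
  assumes "f ` S \<subseteq> S" "x \<in> S"
  shows "(f ^^ n) x \<in> S"
  using assms by (induction n) auto

lemma funpow_preserves_invariant:
  assumes "f ` S \<subseteq> S" "\<forall>x\<in>S. \<phi> (f x) = \<phi> x" "x \<in> S"
  shows "\<phi> ((f ^^ n) x) = \<phi> x"
  using assms by (induction n) (auto simp: funpow_in_invariant_set)

lemma invariant_constant_on_externally_transitive:
  fixes \<phi> :: "complex \<times> complex \<Rightarrow> 'a::metric_space"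
  assumes cont: "continuous_on T2 \<phi>" and fT: "f ` T2 \<subseteq> T2"
    and inv: "\<forall>x\<in>T2. \<phi> (f x) = \<phi> x"
    and trans: "externally_transitive f \<Omega>" and \<Omega>: "\<Omega> \<subseteq> T2"
    and x: "x \<in> \<Omega>" and y: "y \<in> \<Omega>"
  shows "\<phi> x = \<phi> y"
proof (rule ccontr)
  assume "\<phi> x \<noteq> \<phi> y"
  define e where "e = dist (\<phi> x) (\<phi> y) / 2"
  have "e > 0" using \<open>\<phi> x \<noteq> \<phi> y\<close> unfolding e_def by simp
  obtain dx where "dx > 0" and dx: "\<forall>z\<in>T2. dist z x < dx \<longrightarrow> dist (\<phi> z) (\<phi> x) < e"
    using cont x \<Omega> \<open>e > 0\<close> unfolding continuous_on_iff by blast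
  obtain dy where "dy > 0" and dy: "\<forall>z\<in>T2. dist z y < dy \<longrightarrow> dist (\<phi> z) (\<phi> y) < e"
    using cont y \<Omega> \<open>e > 0\<close> unfolding continuous_on_iff by blast
  obtain n where "(f ^^ n) ` (ball x dx \<inter> T2) \<inter> (ball y dy \<inter> T2) \<noteq> {}"
    using trans x y \<open>dx > 0\<close> \<open>dy > 0\<close> unfolding externally_transitive_def
    by (metis centre_in_ball open_ball)
  then obtain z where z: "z \<in> T2" "dist z x < dx" "dist ((f ^^ n) z) y < dy" "(f ^^ n) z \<in> T2"
    by (auto simp: dist_commute)
  have "dist (\<phi> z) (\<phi> x) < e" using dx z by blast
  moreover have "dist (\<phi> z) (\<phi> y) < e"
    using dy z funpow_preserves_invariant[OF fT inv z(1)] by metis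
  ultimately have "dist (\<phi> x) (\<phi> y) < 2 * e"
    using dist_triangle3[of "\<phi> x" "\<phi> y" "\<phi> z"] by linarith
  then show False unfolding e_def by simp
qed

lemma orbit_limit_in_nonwandering:
  assumes fT: "f ` T2 \<subseteq> T2" and x: "x \<in> T2" and l: "l \<in> T2"
    and r: "strict_mono r" and lim: "(\<lambda>n. (f ^^ r n) x) \<longlonglongrightarrow> l"
  shows "l \<in> nonwandering f"
  unfolding nonwandering_def
proof (safe intro!: l)
  fix U assume "open U" "l \<in> U"
  then obtain N where N: "\<forall>n\<ge>N. (f ^^ r n) x \<in> U" using lim unfolding lim_explicit by blast
  define m where "m = r (Suc N) - r N"
  have "r N < r (Suc N)" using r by (simp add: strict_mono_def)
  then have "m \<ge> 1" and "m + r N = r (Suc N)" unfolding m_def by simp_all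
  have "(f ^^ m) ((f ^^ r N) x) = (f ^^ (m + r N)) x" by (simp add: funpow_add)
  then have "(f ^^ m) ((f ^^ r N) x) = (f ^^ r (Suc N)) x"
    using \<open>m + r N = r (Suc N)\<close> by simp
  moreover have "(f ^^ r N) x \<in> U \<inter> T2" "(f ^^ r (Suc N)) x \<in> U \<inter> T2"
    using N funpow_in_invariant_set[OF fT x] by simp_all
  ultimately have "(f ^^ r (Suc N)) x \<in> (f ^^ m) ` (U \<inter> T2) \<inter> (U \<inter> T2)"
    by (metis IntI image_eqI)
  then show "\<exists>n\<ge>1. (f ^^ n) ` (U \<inter> T2) \<inter> (U \<inter> T2) \<noteq> {}"
    using \<open>m \<ge> 1\<close> by blast
qed

lemma orbit_accumulates_on_nonwandering:
  assumes fT: "f ` T2 \<subseteq> T2" and x: "x \<in> T2"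
  obtains l r where "l \<in> nonwandering f" "strict_mono r" "(\<lambda>n. (f ^^ r n) x) \<longlonglongrightarrow> l"
proof -
  have "\<forall>n. (f ^^ n) x \<in> T2" using funpow_in_invariant_set[OF fT x] by blast
  then obtain l r where l: "l \<in> T2" and r: "strict_mono r"
    and "((\<lambda>n. (f ^^ n) x) \<circ> r) \<longlonglongrightarrow> l"
    by (rule seq_compactE[OF compact_imp_seq_compact[OF compact_T2]])
  then have lim: "(\<lambda>n. (f ^^ r n) x) \<longlonglongrightarrow> l" by (simp add: o_def)
  show thesis by (rule that[OF orbit_limit_in_nonwandering[OF fT x l r lim] r lim])
qed

lemma invariant_value_on_nonwandering:
  fixes \<phi> :: "complex \<times> complex \<Rightarrow> 'a::metric_space"
  assumes cont: "continuous_on T2 \<phi>" and fT: "f ` T2 \<subseteq> T2"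
    and inv: "\<forall>x\<in>T2. \<phi> (f x) = \<phi> x" and x: "x \<in> T2"
  obtains l where "l \<in> nonwandering f" "\<phi> l = \<phi> x"
proof -
  obtain l r where l: "l \<in> nonwandering f" and "strict_mono r"
    and lim: "(\<lambda>n. (f ^^ r n) x) \<longlonglongrightarrow> l"
    using orbit_accumulates_on_nonwandering[OF fT x] .
  have "l \<in> T2" using l unfolding nonwandering_def by blast
  have "(\<lambda>n. \<phi> ((f ^^ r n) x)) \<longlonglongrightarrow> \<phi> l"
    using continuous_on_tendsto_compose[OF cont lim \<open>l \<in> T2\<close>]
      funpow_in_invariant_set[OF fT x] by (simp add: always_eventually)
  then have "\<phi> l = \<phi> x"
    using funpow_preserves_invariant[OF fT inv x] by (simp add: LIMSEQ_const_iff)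
  then show thesis using that l by blast
qed

lemma invariant_constant_on_T2:
  fixes \<phi> :: "complex \<times> complex \<Rightarrow> 'a::metric_space"
  assumes "continuous_on T2 \<phi>" "f ` T2 \<subseteq> T2" "\<forall>x\<in>T2. \<phi> (f x) = \<phi> x"
    and "externally_transitive f (nonwandering f)"
    and "x \<in> T2" "y \<in> T2"
  shows "\<phi> x = \<phi> y"
proof -
  have "nonwandering f \<subseteq> T2" unfolding nonwandering_def by blast
  with assms show ?thesis
    using invariant_value_on_nonwandering[OF assms(1-3)]
      invariant_constant_on_externally_transitive[OF assms(1-4)] by metis
qed

lemma semiconj_quotient_invariant:
  assumes h1: "semiconj f \<rho> h1" and h2: "semiconj f \<rho> h2"
  shows "continuous_on T2 (\<lambda>x. h1 x / h2 x)"
    and "\<forall>x\<in>T2. h1 (f x) / h2 (f x) = h1 x / h2 x"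
    and "x \<in> T2 \<Longrightarrow> norm (h1 x / h2 x) = 1"
proof -
  have norms: "norm (h1 x) = 1" "norm (h2 x) = 1" if "x \<in> T2" for x
    using h1 h2 that unfolding semiconj_def S1_def by auto
  then have "\<forall>x\<in>T2. h2 x \<noteq> 0" by fastforce
  then show "continuous_on T2 (\<lambda>x. h1 x / h2 x)"
    using h1 h2 unfolding semiconj_def by (intro continuous_on_divide) auto
  show "x \<in> T2 \<Longrightarrow> norm (h1 x / h2 x) = 1" by (simp add: norms norm_divide)
  show "\<forall>x\<in>T2. h1 (f x) / h2 (f x) = h1 x / h2 x"
  proof
    fix x assume "x \<in> T2"
    then have "h1 (f x) = cis (2 * pi * \<rho>) * h1 x" "h2 (f x) = cis (2 * pi * \<rho>) * h2 x"
      using h1 h2 unfolding semiconj_def rot_def by blast+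
    then show "h1 (f x) / h2 (f x) = h1 x / h2 x" by simp
  qed
qed

lemma rot_Arg:
  assumes "norm c = 1"
  shows "rot (Arg c / (2 * pi)) z = c * z"
proof -
  have "c \<noteq> 0" using assms by auto
  then have "cis (Arg c) = c" using assms cis_Arg[of c] by (simp add: sgn_div_norm)
  then show ?thesis unfolding rot_def by simp
qed

theorem mainTheorem9:
  fixes f :: "complex \<times> complex \<Rightarrow> complex \<times> complex" and \<rho> :: real
  assumes "\<exists>g. homeomorphism T2 T2 f g"
    and "\<exists>h. semiconj f \<rho> h"
    and "externally_transitive f (nonwandering f)"
  shows "\<forall>h1 h2. semiconj f \<rho> h1 \<and> semiconj f \<rho> h2 \<longrightarrow>
           (\<exists>\<alpha>::real. \<forall>x\<in>T2. h1 x = rot \<alpha> (h2 x))"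
proof (intro allI impI)
  fix h1 h2
  assume "semiconj f \<rho> h1 \<and> semiconj f \<rho> h2"
  then have h1: "semiconj f \<rho> h1" and h2: "semiconj f \<rho> h2" by blast+
  have fT: "f ` T2 \<subseteq> T2" using assms(1) unfolding homeomorphism_def by blast
  define p :: "complex \<times> complex" where "p = (1, 1)"
  have p: "p \<in> T2" unfolding p_def T2_def S1_def by simp
  define c where "c = h1 p / h2 p"
  have const: "h1 x / h2 x = c" if "x \<in> T2" for x
    using invariant_constant_on_T2[where \<phi> = "\<lambda>x. h1 x / h2 x",
        OF semiconj_quotient_invariant(1)[OF h1 h2] fT semiconj_quotient_invariant(2)[OF h1 h2]
        assms(3) that p]
    unfolding c_def .
  have "norm c = 1" using semiconj_quotient_invariant(3)[OF h1 h2 p] unfolding c_def .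
  show "\<exists>\<alpha>::real. \<forall>x\<in>T2. h1 x = rot \<alpha> (h2 x)"
  proof (intro exI ballI)
    fix x assume "x \<in> T2"
    then have "h2 x \<noteq> 0" using semiconj_quotient_invariant(3)[OF h1 h2, of x] by auto
    then show "h1 x = rot (Arg c / (2 * pi)) (h2 x)"
      using const[OF \<open>x \<in> T2\<close>] rot_Arg[OF \<open>norm c = 1\<close>] by (simp add: divide_eq_eq)
  qed
qed

end
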